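(* Let $\mathcal{C}$ be a clutter and let $A$ be the $n\times s$ matrix with columns $v_1,\ldots,v_s$. Then $$I(X)=\big(\{t^{a^+}-t^{a^-}: a\in\mathbb{Z}^s,\ Aa^+\equiv Aa^-\ (\mathrm{mod}\ q-1),\ |a^+|=|a^-|\}\big),$$ where $a^+,a^-\in\mathbb{N}^s$ are the positive and negative parts of $a$ ($a=a^+-a^-$, disjoint supports), the congruence is entrywise, and $|b|=b_1+\cdots+b_s$.
   Context: Let $K=\mathbb{F}_q$ be a finite field with $q\neq 2$ elements. A clutter $\mathcal{C}$ with vertex set $\{y_1,\ldots,y_n\}$ is a family of subsets (edges) of this set such that no edge is contained in another; let its edges be $f_1,\ldots,f_s$ ($s\geq 2$) with characteristic vectors $v_i=\sum_{y_j\in f_i}e_j\in\{0,1\}^n$. For $x\in K^n$ write $x^{v_i}=\prod_j x_j^{v_{ij}}$. Let $X=\{[(x^{v_1},\ldots,x^{v_s})]\in\mathbb{P}^{s-1}: x\in (K^* )^n\}$, let $S=K[t_1,\ldots,t_s]$ with the standard grading, and let $I(X)$ be the ideal of $S$ generated by the homogeneous polynomials vanishing on $X$. *)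

theory Defs
  imports Main "HOL-Library.Poly_Mapping" "HOL-Library.Cardinality"
begin

text \<open>Variable t_(i+1) of the paper is variable index i here (0-based).\<close>

type_synonym 'a mpoly = "(nat \<Rightarrow>\<^sub>0 nat) \<Rightarrow>\<^sub>0 'a"

definition polys :: "nat \<Rightarrow> 'a::comm_ring_1 mpoly set" where
  "polys s = {p. \<forall>m \<in> Poly_Mapping.keys p. Poly_Mapping.keys m \<subseteq> {..<s}}"

definition monom :: "(nat \<Rightarrow>\<^sub>0 nat) \<Rightarrow> 'a::comm_ring_1 mpoly" where
  "monom b = Poly_Mapping.single b 1"

definition mdeg :: "(nat \<Rightarrow>\<^sub>0 nat) \<Rightarrow> nat" where
  "mdeg m = (\<Sum>i\<in>Poly_Mapping.keys m. Poly_Mapping.lookup m i)"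

definition homogeneous :: "'a::comm_ring_1 mpoly \<Rightarrow> bool" where
  "homogeneous p \<longleftrightarrow> (\<exists>d. \<forall>m \<in> Poly_Mapping.keys p. mdeg m = d)"

definition eval :: "'a::comm_ring_1 mpoly \<Rightarrow> (nat \<Rightarrow> 'a) \<Rightarrow> 'a" where
  "eval p y = (\<Sum>m\<in>Poly_Mapping.keys p. Poly_Mapping.lookup p m * (\<Prod>i\<in>Poly_Mapping.keys m. y i ^ Poly_Mapping.lookup m i))"

definition ideal_gen :: "nat \<Rightarrow> 'a::comm_ring_1 mpoly set \<Rightarrow> 'a mpoly set" where
  "ideal_gen s G = {p. \<exists>F c. finite F \<and> F \<subseteq> G \<and> (\<forall>g\<in>F. c g \<in> polys s)
                          \<and> p = (\<Sum>g\<in>F. c g * g)}"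

definition clutter :: "nat \<Rightarrow> nat \<Rightarrow> (nat \<Rightarrow> nat set) \<Rightarrow> bool" where
  "clutter n s f \<longleftrightarrow> (\<forall>i<s. f i \<subseteq> {..<n}) \<and>
                     (\<forall>i<s. \<forall>j<s. i \<noteq> j \<longrightarrow> \<not> f i \<subseteq> f j)"

definition edge_mon :: "(nat \<Rightarrow> nat set) \<Rightarrow> (nat \<Rightarrow> 'a::comm_ring_1) \<Rightarrow> nat \<Rightarrow> 'a" where
  "edge_mon f x i = (\<Prod>j\<in>f i. x j)"

text \<open>The point (x^{v_1},...,x^{v_s}) (coordinates beyond s are irrelevant, set to 0).\<close>
definition param_pt :: "nat \<Rightarrow> (nat \<Rightarrow> nat set) \<Rightarrow> (nat \<Rightarrow> 'a::comm_ring_1) \<Rightarrow> nat \<Rightarrow> 'a" where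
  "param_pt s f x = (\<lambda>i. if i < s then edge_mon f x i else 0)"

text \<open>A homogeneous polynomial vanishes on the projective point [P] iff it vanishes
  at (any, equivalently every) representative P. Hence I(X) is the ideal of S generated by
  the homogeneous polynomials of S vanishing at all (x^{v_1},...,x^{v_s}), x \<in> (K^*)^n.\<close>
definition vanishing_ideal :: "nat \<Rightarrow> nat \<Rightarrow> (nat \<Rightarrow> nat set) \<Rightarrow> 'a::field mpoly set" where
  "vanishing_ideal n s f = ideal_gen s
     {g \<in> polys s. homogeneous g \<and>
        (\<forall>x. (\<forall>j<n. x j \<noteq> 0) \<longrightarrow> eval g (param_pt s f x) = 0)}"

definition pos_part :: "(nat \<Rightarrow>\<^sub>0 int) \<Rightarrow> (nat \<Rightarrow>\<^sub>0 nat)" where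
  "pos_part a = Poly_Mapping.map (\<lambda>z. nat z) a"

definition neg_part :: "(nat \<Rightarrow>\<^sub>0 int) \<Rightarrow> (nat \<Rightarrow>\<^sub>0 nat)" where
  "neg_part a = Poly_Mapping.map (\<lambda>z. nat (- z)) a"

text \<open>(A b)_j = sum over i<s of v_{ij} b_i = sum of b_i over edges i containing vertex j.\<close>
definition Amul :: "nat \<Rightarrow> (nat \<Rightarrow> nat set) \<Rightarrow> (nat \<Rightarrow>\<^sub>0 nat) \<Rightarrow> nat \<Rightarrow> int" where
  "Amul s f b j = (\<Sum>i\<in>{i. i < s \<and> j \<in> f i}. int (Poly_Mapping.lookup b i))"

definition binomial_gens :: "nat \<Rightarrow> nat \<Rightarrow> (nat \<Rightarrow> nat set) \<Rightarrow> 'a::{field,finite} mpoly set" where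
  "binomial_gens n s f =
     {monom (pos_part a) - monom (neg_part a) | a.
        Poly_Mapping.keys a \<subseteq> {..<s} \<and>
        (\<forall>j<n. Amul s f (pos_part a) j mod (int (CARD('a)) - 1)
               = Amul s f (neg_part a) j mod (int (CARD('a)) - 1)) \<and>
        mdeg (pos_part a) = mdeg (neg_part a)}"

end

theory Submission
  imports Defs "HOL-Computational_Algebra.Polynomial" "HOL-Library.FuncSet"
    "HOL-Number_Theory.Cong"
begin

(* Write K = F_q, Q = q - 1 and, for an exponent vector m of S, let A m be
   the vector whose j-th entry is the sum of the m_i over the edges i containing vertex j.
   At the point (x^{v_1},...,x^{v_s}) the monomial t^m takes the value
   prod_j x_j^{(A m)_j}, and x^k only depends on k mod Q for nonzero x.  Hence every
   binomial generator is homogeneous and vanishes on X, which gives one inclusion.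
   Conversely let g = sum_m c_m t^m be homogeneous and vanish on X.  The power sums
   sum_{y <> 0} y^k equal -1 or 0 according as Q divides k or not, so the characters
   x |-> prod_j x_j^{e_j} are orthogonal on the points with nonzero coordinates; pairing
   g with them shows that the c_m sum to zero over every class of monomials with the
   same A m mod Q.  Choosing a representative r m in each class, g is therefore the sum
   of the c_m (t^m - t^{r m}), and t^m - t^{m'}, for monomials of equal degree in the
   same class, is a monomial multiple of a generator t^{a+} - t^{a-} with a = m - m'. *)


section \<open>Power sums over a finite field\<close>

lemma card_field_ge_2: "CARD('a::{field,finite}) \<ge> 2"
proof -
  have "card {0::'a, 1} \<le> CARD('a)" by (rule card_mono) auto
  thus ?thesis by simp
qed

lemma card_nonzero: "card (-{0::'a::{zero,finite}}) = CARD('a) - 1"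
  by (simp add: Compl_eq_Diff_UNIV card_Diff_singleton)

text \<open>The characteristic divides q: translation by 1 permutes the field, so summing
  y + 1 over all y shows q \<cdot> 1 = 0.\<close>
lemma of_nat_card_field: "of_nat CARD('a::{field,finite}) = (0::'a)"
proof -
  have "(\<Sum>y\<in>UNIV. y + 1) = (\<Sum>y\<in>(UNIV::'a set). y)"
    by (rule sum.reindex_bij_witness[of _ "\<lambda>y. y - 1" "\<lambda>y. y + 1"]) auto
  thus ?thesis by (simp add: sum.distrib)
qed

text \<open>Fermat's little theorem for a finite field: the units form a group of order q - 1.\<close>
lemma unit_power_card_minus_1:
  fixes x :: "'a::{field,finite}"
  assumes "x \<noteq> 0"
  shows "x ^ (CARD('a) - 1) = 1"
proof -
  have "(\<Prod>y\<in>-{0}. x * y) = (\<Prod>y\<in>-{0::'a}. y)"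
    by (rule prod.reindex_bij_witness[of _ "\<lambda>y. y / x" "\<lambda>y. x * y"]) (use assms in auto)
  moreover have "(\<Prod>y\<in>-{0}. x * y) = x ^ (CARD('a) - 1) * (\<Prod>y\<in>-{0::'a}. y)"
    by (simp add: prod.distrib card_nonzero)
  moreover have "(\<Prod>y\<in>-{0::'a}. y) \<noteq> 0" by simp
  ultimately show ?thesis by simp
qed

lemma unit_power_cong:
  fixes x :: "'a::{field,finite}"
  assumes "x \<noteq> 0" and "[k = l] (mod CARD('a) - 1)"
  shows "x ^ k = x ^ l"
proof -
  have reduce: "x ^ k = x ^ (k mod (CARD('a) - 1))" for k
  proof -
    have "x ^ k = (x ^ (CARD('a) - 1)) ^ (k div (CARD('a) - 1)) * x ^ (k mod (CARD('a) - 1))"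
      by (simp flip: power_mult power_add)
    thus ?thesis using unit_power_card_minus_1[OF assms(1)] by simp
  qed
  show ?thesis using reduce[of k] reduce[of l] assms(2) by (simp add: cong_def)
qed

text \<open>If q - 1 does not divide k, then y \<mapsto> y^k is not constant on the units:
  otherwise y^(k mod (q-1)) - 1 would have q - 1 roots while having smaller degree.\<close>
lemma exists_unit_power_ne_1:
  assumes "\<not> (CARD('a::{field,finite}) - 1) dvd k"
  shows "\<exists>y::'a. y \<noteq> 0 \<and> y ^ k \<noteq> 1"
proof (rule ccontr)
  assume all_roots: "\<not> ?thesis"
  define r where "r = k mod (CARD('a) - 1)"
  have r: "0 < r" "r < CARD('a) - 1"
    using assms card_field_ge_2[where 'a='a] by (simp_all add: r_def mod_eq_0_iff_dvd[symmetric])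
  define p :: "'a poly" where "p = Polynomial.monom 1 r - 1"
  have deg: "degree p = r"
    unfolding p_def using r degree_add_eq_left[of "-1" "Polynomial.monom (1::'a) r"]
    by (simp add: degree_monom_eq)
  hence "p \<noteq> 0" using r by auto
  have "-{0} \<subseteq> {y. poly p y = 0}"
  proof
    fix y :: 'a assume "y \<in> -{0}"
    moreover from this have "y ^ k = 1" using all_roots by auto
    ultimately have "y ^ r = 1" using unit_power_cong[of y r k] by (simp add: r_def cong_def)
    thus "y \<in> {y. poly p y = 0}" by (simp add: p_def poly_monom)
  qed
  hence "card (-{0::'a}) \<le> card {y. poly p y = 0}"
    by (intro card_mono poly_roots_finite[OF \<open>p \<noteq> 0\<close>])
  also have "\<dots> \<le> r" using card_poly_roots_bound[OF \<open>p \<noteq> 0\<close>] deg by simp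
  finally show False using r by (simp add: card_nonzero)
qed

text \<open>Power sums over the units: -1 = (q - 1) \<cdot> 1 if the power map is trivial, and 0
  otherwise, since multiplying by a unit y with y^k \<noteq> 1 permutes the summands.\<close>
lemma sum_units_power:
  "(\<Sum>y\<in>-{0::'a::{field,finite}}. y ^ k) = (if (CARD('a) - 1) dvd k then -1 else 0)"
proof (cases "(CARD('a) - 1) dvd k")
  case True
  hence "(\<Sum>y\<in>-{0::'a}. y ^ k) = (\<Sum>y\<in>-{0::'a}. 1)"
    by (intro sum.cong refl) (simp add: unit_power_cong[of _ k 0] cong_0_iff)
  also have "\<dots> = of_nat (CARD('a) - 1)" by (simp add: card_nonzero)
  also have "\<dots> = -1"
    using of_nat_card_field[where 'a='a] card_field_ge_2[where 'a='a] by (simp add: of_nat_diff)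
  finally show ?thesis using True by simp
next
  case False
  then obtain y :: 'a where y: "y \<noteq> 0" "y ^ k \<noteq> 1" using exists_unit_power_ne_1 by blast
  have "(\<Sum>z\<in>-{0}. (y * z) ^ k) = (\<Sum>z\<in>-{0::'a}. z ^ k)"
    by (rule sum.reindex_bij_witness[of _ "\<lambda>z. z / y" "\<lambda>z. y * z"]) (use y in auto)
  hence "y ^ k * (\<Sum>z\<in>-{0}. z ^ k) = 1 * (\<Sum>z\<in>-{0::'a}. z ^ k)"
    by (simp add: power_mult_distrib sum_distrib_left)
  hence "(\<Sum>z\<in>-{0::'a}. z ^ k) = 0" using y(2) by (metis mult_cancel_right)
  thus ?thesis using False by simp
qed

lemma sum_torus_character:
  "(\<Sum>x\<in>PiE {..<n} (\<lambda>_. -{0::'a::{field,finite}}). \<Prod>j<n. x j ^ e j)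
     = (if \<forall>j<n. (CARD('a) - 1) dvd e j then (-1) ^ n else 0)"
proof -
  have "(\<Sum>x\<in>PiE {..<n} (\<lambda>_. -{0::'a}). \<Prod>j<n. x j ^ e j) = (\<Prod>j<n. \<Sum>y\<in>-{0::'a}. y ^ e j)"
    by (rule prod_sum_PiE[symmetric]) auto
  also have "\<dots> = (\<Prod>j<n. if (CARD('a) - 1) dvd e j then -1 else 0)"
    by (simp only: sum_units_power)
  also have "\<dots> = (if \<forall>j<n. (CARD('a) - 1) dvd e j then (-1) ^ n else 0)"
    by (auto intro: prod_zero)
  finally show ?thesis .
qed


section \<open>Polynomials, ideals and evaluation\<close>

lemma polys_add: "p \<in> polys s \<Longrightarrow> q \<in> polys s \<Longrightarrow> p + q \<in> polys s"
  unfolding polys_def using keys_add[of p q] by blast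

lemma polys_zero: "0 \<in> polys s"
  unfolding polys_def by simp

lemma polys_single: "Poly_Mapping.keys m \<subseteq> {..<s} \<Longrightarrow> Poly_Mapping.single m c \<in> polys s"
  unfolding polys_def by simp

lemma polys_mult:
  assumes "p \<in> polys s" and "q \<in> polys s"
  shows "p * q \<in> polys s"
  unfolding polys_def
proof (intro CollectI ballI)
  fix m assume "m \<in> Poly_Mapping.keys (p * q)"
  then obtain a b where "m = a + b" "a \<in> Poly_Mapping.keys p" "b \<in> Poly_Mapping.keys q"
    using keys_mult by blast
  with assms show "Poly_Mapping.keys m \<subseteq> {..<s}"
    using keys_add[of a b] unfolding polys_def by blast
qed

lemma ideal_gen_base: "g \<in> G \<Longrightarrow> g \<in> ideal_gen s G"
  unfolding ideal_gen_def
  by (intro CollectI exI[of _ "{g}"] exI[of _ "\<lambda>_. 1"]) (simp add: polys_def)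

lemma ideal_gen_add:
  assumes "p \<in> ideal_gen s G" and "q \<in> ideal_gen s G"
  shows "p + q \<in> ideal_gen s G"
proof -
  obtain F1 c1 where 1: "finite F1" "F1 \<subseteq> G" "\<forall>g\<in>F1. c1 g \<in> polys s" "p = (\<Sum>g\<in>F1. c1 g * g)"
    using assms(1) unfolding ideal_gen_def by blast
  obtain F2 c2 where 2: "finite F2" "F2 \<subseteq> G" "\<forall>g\<in>F2. c2 g \<in> polys s" "q = (\<Sum>g\<in>F2. c2 g * g)"
    using assms(2) unfolding ideal_gen_def by blast
  define c where "c g = (if g \<in> F1 then c1 g else 0) + (if g \<in> F2 then c2 g else 0)" for g
  have fin: "finite (F1 \<union> F2)" using 1 2 by simp
  have "(\<Sum>g\<in>F1 \<union> F2. c g * g) = (\<Sum>g\<in>F1 \<union> F2. if g \<in> F1 then c1 g * g else 0)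
        + (\<Sum>g\<in>F1 \<union> F2. if g \<in> F2 then c2 g * g else 0)"
    unfolding c_def sum.distrib[symmetric] by (rule sum.cong) (auto simp: distrib_right)
  also have "\<dots> = p + q"
    using sum.inter_restrict[OF fin, of "\<lambda>g. c1 g * g" F1] sum.inter_restrict[OF fin, of "\<lambda>g. c2 g * g" F2]
    by (simp add: 1(4) 2(4) Int_absorb1)
  finally have "p + q = (\<Sum>g\<in>F1 \<union> F2. c g * g)" by simp
  moreover have "\<forall>g\<in>F1 \<union> F2. c g \<in> polys s"
    using 1(3) 2(3) by (auto simp: c_def intro!: polys_add polys_zero)
  ultimately show ?thesis unfolding ideal_gen_def using 1 2 fin
    by (intro CollectI exI[of _ "F1 \<union> F2"] exI[of _ c]) auto
qed

lemma ideal_gen_mult: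
  assumes "a \<in> polys s" and "p \<in> ideal_gen s G"
  shows "a * p \<in> ideal_gen s G"
proof -
  obtain F c where 1: "finite F" "F \<subseteq> G" "\<forall>g\<in>F. c g \<in> polys s" "p = (\<Sum>g\<in>F. c g * g)"
    using assms(2) unfolding ideal_gen_def by blast
  have "a * p = (\<Sum>g\<in>F. (a * c g) * g)" using 1(4) by (simp add: sum_distrib_left mult.assoc)
  moreover have "\<forall>g\<in>F. a * c g \<in> polys s" using 1(3) assms(1) polys_mult by blast
  ultimately show ?thesis unfolding ideal_gen_def using 1
    by (intro CollectI exI[of _ F] exI[of _ "\<lambda>g. a * c g"]) auto
qed

lemma ideal_gen_sum:
  assumes "finite I" and "\<And>i. i \<in> I \<Longrightarrow> p i \<in> ideal_gen s G"
  shows "(\<Sum>i\<in>I. p i) \<in> ideal_gen s G"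
  using assms
proof (induction I rule: finite_induct)
  case empty
  show ?case unfolding ideal_gen_def by (intro CollectI exI[of _ "{}"]) simp
qed (simp add: ideal_gen_add)

lemma ideal_gen_mono:
  assumes "G \<subseteq> ideal_gen s H"
  shows "ideal_gen s G \<subseteq> ideal_gen s H"
proof
  fix p assume "p \<in> ideal_gen s G"
  then obtain F c where 1: "finite F" "F \<subseteq> G" "\<forall>g\<in>F. c g \<in> polys s" "p = (\<Sum>g\<in>F. c g * g)"
    unfolding ideal_gen_def by blast
  show "p \<in> ideal_gen s H" unfolding 1(4)
    by (rule ideal_gen_sum[OF 1(1)]) (use 1 assms in \<open>auto intro: ideal_gen_mult\<close>)
qed

definition monom_value :: "(nat \<Rightarrow>\<^sub>0 nat) \<Rightarrow> (nat \<Rightarrow> 'a::comm_ring_1) \<Rightarrow> 'a" where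
  "monom_value m y = (\<Prod>i\<in>Poly_Mapping.keys m. y i ^ Poly_Mapping.lookup m i)"

lemma monom_value_superset:
  assumes "finite B" and "Poly_Mapping.keys m \<subseteq> B"
  shows "monom_value m y = (\<Prod>i\<in>B. y i ^ Poly_Mapping.lookup m i)"
  unfolding monom_value_def
  by (rule prod.mono_neutral_left[OF assms]) (auto simp: in_keys_iff)

lemma eval_superset:
  assumes "finite M" and "Poly_Mapping.keys p \<subseteq> M"
  shows "eval p y = (\<Sum>m\<in>M. Poly_Mapping.lookup p m * monom_value m y)"
  unfolding eval_def monom_value_def
  by (rule sum.mono_neutral_left[OF assms]) (auto simp: in_keys_iff)

lemma eval_diff: "eval (p - q) y = eval p y - eval q y"
proof -
  let ?M = "Poly_Mapping.keys p \<union> Poly_Mapping.keys q"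
  have "eval (p - q) y = (\<Sum>m\<in>?M. Poly_Mapping.lookup (p - q) m * monom_value m y)"
    by (rule eval_superset) (auto simp: keys_diff)
  also have "\<dots> = (\<Sum>m\<in>?M. Poly_Mapping.lookup p m * monom_value m y)
                 - (\<Sum>m\<in>?M. Poly_Mapping.lookup q m * monom_value m y)"
    by (simp add: lookup_minus left_diff_distrib sum_subtractf)
  also have "\<dots> = eval p y - eval q y"
    by (simp add: eval_superset[of ?M p] eval_superset[of ?M q])
  finally show ?thesis .
qed

lemma eval_monom: "eval (Defs.monom m) y = monom_value m y"
  by (simp add: eval_def monom_value_def Defs.monom_def)

lemma sum_of_terms: "p = (\<Sum>m\<in>Poly_Mapping.keys p. Poly_Mapping.single m (Poly_Mapping.lookup p m))"
  by (rule poly_mapping_eqI) (simp add: lookup_sum lookup_single when_def in_keys_iff)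

lemma sum_terms_fibres_zero:
  assumes "finite K" and fibre: "\<And>m. m \<in> K \<Longrightarrow> (\<Sum>m'\<in>{m'\<in>K. r m' = r m}. c m') = 0"
  shows "(\<Sum>m\<in>K. Poly_Mapping.single (r m) (c m)) = (0 :: ('b \<Rightarrow>\<^sub>0 nat) \<Rightarrow>\<^sub>0 'a::comm_ring_1)"
proof (rule poly_mapping_eqI)
  fix k
  have "Poly_Mapping.lookup (\<Sum>m\<in>K. Poly_Mapping.single (r m) (c m)) k = (\<Sum>m\<in>{m\<in>K. r m = k}. c m)"
    by (simp add: lookup_sum lookup_single when_def sum.inter_filter[OF assms(1)])
  also have "\<dots> = 0"
  proof (cases "\<exists>m\<in>K. r m = k")
    case True
    then obtain m where "m \<in> K" "r m = k" by blast
    thus ?thesis using fibre by blast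
  qed (auto intro!: sum.neutral)
  finally show "Poly_Mapping.lookup (\<Sum>m\<in>K. Poly_Mapping.single (r m) (c m)) k = Poly_Mapping.lookup 0 k"
    by simp
qed


section \<open>The exponent map of the clutter\<close>

definition Anat :: "nat \<Rightarrow> (nat \<Rightarrow> nat set) \<Rightarrow> (nat \<Rightarrow>\<^sub>0 nat) \<Rightarrow> nat \<Rightarrow> nat" where
  "Anat s f b j = (\<Sum>i\<in>{i. i < s \<and> j \<in> f i}. Poly_Mapping.lookup b i)"

lemma Anat_add: "Anat s f (a + b) j = Anat s f a j + Anat s f b j"
  by (simp add: Anat_def lookup_add sum.distrib)

lemma Amul_cong_iff:
  assumes "q \<ge> 1"
  shows "Amul s f b j mod (int q - 1) = Amul s f b' j mod (int q - 1)
         \<longleftrightarrow> [Anat s f b j = Anat s f b' j] (mod q - 1)"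
proof -
  have q: "int q - 1 = int (q - 1)" using assms by simp
  have A: "Amul s f c j = int (Anat s f c j)" for c by (simp add: Amul_def Anat_def)
  show ?thesis unfolding q A cong_def by (metis of_nat_eq_iff zmod_int)
qed

lemma monom_value_param_pt:
  assumes edges: "\<forall>i<s. f i \<subseteq> {..<n}" and "Poly_Mapping.keys m \<subseteq> {..<s}"
  shows "monom_value m (param_pt s f x) = (\<Prod>j<n. x j ^ Anat s f m j)"
proof -
  have "monom_value m (param_pt s f x) = (\<Prod>i<s. param_pt s f x i ^ Poly_Mapping.lookup m i)"
    by (rule monom_value_superset) (use assms in auto)
  also have "\<dots> = (\<Prod>i<s. \<Prod>j\<in>f i. x j ^ Poly_Mapping.lookup m i)"
    by (simp add: param_pt_def edge_mon_def prod_power_distrib)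
  also have "\<dots> = (\<Prod>i<s. \<Prod>j<n. if j \<in> f i then x j ^ Poly_Mapping.lookup m i else 1)"
  proof (rule prod.cong[OF refl])
    fix i assume "i \<in> {..<s}"
    hence "{j \<in> {..<n}. j \<in> f i} = f i" using edges by auto
    thus "(\<Prod>j\<in>f i. x j ^ Poly_Mapping.lookup m i)
            = (\<Prod>j<n. if j \<in> f i then x j ^ Poly_Mapping.lookup m i else 1)"
      using prod.inter_filter[of "{..<n}" "\<lambda>j. x j ^ Poly_Mapping.lookup m i" "\<lambda>j. j \<in> f i"] by simp
  qed
  also have "\<dots> = (\<Prod>j<n. \<Prod>i<s. if j \<in> f i then x j ^ Poly_Mapping.lookup m i else 1)"
    by (rule prod.swap)
  also have "\<dots> = (\<Prod>j<n. x j ^ Anat s f m j)"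
    by (intro prod.cong refl)
      (simp add: prod.If_cases Anat_def power_sum Collect_conj_eq lessThan_def Int_commute)
  finally show ?thesis .
qed

lemma eval_param_pt:
  assumes edges: "\<forall>i<s. f i \<subseteq> {..<n}" and "g \<in> polys s"
  shows "eval g (param_pt s f x)
           = (\<Sum>m\<in>Poly_Mapping.keys g. Poly_Mapping.lookup g m * (\<Prod>j<n. x j ^ Anat s f m j))"
proof -
  have "eval g (param_pt s f x)
          = (\<Sum>m\<in>Poly_Mapping.keys g. Poly_Mapping.lookup g m * monom_value m (param_pt s f x))"
    by (simp add: eval_def monom_value_def)
  also have "\<dots> = (\<Sum>m\<in>Poly_Mapping.keys g. Poly_Mapping.lookup g m * (\<Prod>j<n. x j ^ Anat s f m j))"
    using assms(2) by (intro sum.cong refl) (simp add: polys_def monom_value_param_pt[OF edges])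
  finally show ?thesis .
qed


section \<open>The binomial generators vanish on X\<close>

lemma keys_binomial:
  "Poly_Mapping.keys (Defs.monom P - Defs.monom N :: 'a::comm_ring_1 mpoly) \<subseteq> {P, N}"
  using keys_diff[of "Defs.monom P :: 'a mpoly" "Defs.monom N"]
  by (auto simp: Defs.monom_def split: if_splits)

lemma binomial_polys:
  assumes "Poly_Mapping.keys P \<subseteq> {..<s}" and "Poly_Mapping.keys N \<subseteq> {..<s}"
  shows "(Defs.monom P - Defs.monom N :: 'a::comm_ring_1 mpoly) \<in> polys s"
  using assms keys_binomial[of P N] unfolding polys_def by blast

lemma binomial_homogeneous:
  assumes "mdeg P = mdeg N"
  shows "homogeneous (Defs.monom P - Defs.monom N :: 'a::comm_ring_1 mpoly)"
  unfolding homogeneous_def using assms keys_binomial[of P N] by (intro exI[of _ "mdeg P"]) auto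

text \<open>A binomial t^P - t^N with A P \<equiv> A N (mod q - 1) vanishes at every point of X,
  since both monomials take the value x^(A P) = x^(A N) there.\<close>
lemma binomial_vanishes:
  fixes x :: "nat \<Rightarrow> 'a::{field,finite}"
  assumes edges: "\<forall>i<s. f i \<subseteq> {..<n}"
    and keys: "Poly_Mapping.keys P \<subseteq> {..<s}" "Poly_Mapping.keys N \<subseteq> {..<s}"
    and cong: "\<forall>j<n. [Anat s f P j = Anat s f N j] (mod CARD('a) - 1)"
    and x: "\<forall>j<n. x j \<noteq> 0"
  shows "eval (Defs.monom P - Defs.monom N) (param_pt s f x) = 0"
proof -
  have "(\<Prod>j<n. x j ^ Anat s f P j) = (\<Prod>j<n. x j ^ Anat s f N j)"
    using x cong by (intro prod.cong refl) (simp add: unit_power_cong)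
  thus ?thesis
    by (simp add: eval_diff eval_monom monom_value_param_pt[OF edges] keys)
qed

lemma lookup_pos_part: "Poly_Mapping.lookup (pos_part a) i = nat (Poly_Mapping.lookup a i)"
  by (simp add: pos_part_def Poly_Mapping.map.rep_eq when_def)

lemma lookup_neg_part: "Poly_Mapping.lookup (neg_part a) i = nat (- Poly_Mapping.lookup a i)"
  by (simp add: neg_part_def Poly_Mapping.map.rep_eq when_def)

lemma keys_pos_part: "Poly_Mapping.keys (pos_part a) \<subseteq> Poly_Mapping.keys a"
  by (auto simp: in_keys_iff lookup_pos_part)

lemma keys_neg_part: "Poly_Mapping.keys (neg_part a) \<subseteq> Poly_Mapping.keys a"
  by (auto simp: in_keys_iff lookup_neg_part)

lemma binomial_gens_vanishing:
  assumes edges: "\<forall>i<s. f i \<subseteq> {..<n}"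
    and "b \<in> (binomial_gens n s f :: 'a::{field,finite} mpoly set)"
  shows "b \<in> polys s \<and> homogeneous b \<and> (\<forall>x. (\<forall>j<n. x j \<noteq> 0) \<longrightarrow> eval b (param_pt s f x) = 0)"
proof -
  obtain a where b: "b = Defs.monom (pos_part a) - Defs.monom (neg_part a)"
    and keys: "Poly_Mapping.keys a \<subseteq> {..<s}"
    and cong: "\<forall>j<n. Amul s f (pos_part a) j mod (int CARD('a) - 1)
                     = Amul s f (neg_part a) j mod (int CARD('a) - 1)"
    and deg: "mdeg (pos_part a) = mdeg (neg_part a)"
    using assms(2) unfolding binomial_gens_def by blast
  have "CARD('a) \<ge> 1" using card_field_ge_2[where 'a='a] by simp
  hence "\<forall>j<n. [Anat s f (pos_part a) j = Anat s f (neg_part a) j] (mod CARD('a) - 1)"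
    using cong Amul_cong_iff by blast
  moreover have "Poly_Mapping.keys (pos_part a) \<subseteq> {..<s}" "Poly_Mapping.keys (neg_part a) \<subseteq> {..<s}"
    using keys keys_pos_part keys_neg_part by blast+
  ultimately show ?thesis
    unfolding b using binomial_polys binomial_homogeneous[OF deg] binomial_vanishes[OF edges]
    by blast
qed


section \<open>Coefficient sums over residue classes\<close>

text \<open>Divisibility criterion used to detect the trivial character: adding (Q - 1) b
  to a is subtracting b modulo Q.\<close>
lemma dvd_add_mult_pred_iff:
  fixes a b Q :: nat
  assumes "Q \<ge> 1"
  shows "Q dvd a + (Q - 1) * b \<longleftrightarrow> [a = b] (mod Q)"
proof -
  have "a + (Q - 1) * b + b = a + Q * b" using assms by (cases Q) auto
  hence "Q dvd a + (Q - 1) * b \<longleftrightarrow> [a + Q * b = 0 + b] (mod Q)"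
    by (metis cong_0_iff cong_add_rcancel_nat)
  also have "\<dots> \<longleftrightarrow> [a = b] (mod Q)" by (simp add: cong_def)
  finally show ?thesis .
qed

text \<open>The key consequence of character orthogonality: if g vanishes on X, then its
  coefficients sum to zero over every class of monomials m with a prescribed value of
  A m modulo q - 1.  Pair the values of g with the character x \<mapsto> x^((q-2)e).\<close>
lemma coefficient_class_sum_vanishes:
  fixes g :: "'a::{field,finite} mpoly"
  assumes edges: "\<forall>i<s. f i \<subseteq> {..<n}" and g: "g \<in> polys s"
    and van: "\<forall>x. (\<forall>j<n. x j \<noteq> 0) \<longrightarrow> eval g (param_pt s f x) = 0"
  shows "(\<Sum>m\<in>{m \<in> Poly_Mapping.keys g. \<forall>j<n. [Anat s f m j = e j] (mod CARD('a) - 1)}.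
           Poly_Mapping.lookup g m) = 0"
proof -
  define Q where "Q = CARD('a) - 1"
  have "Q \<ge> 1" using card_field_ge_2[where 'a='a] by (simp add: Q_def)
  define T where "T = PiE {..<n} (\<lambda>_. -{0::'a})"
  define K where "K = Poly_Mapping.keys g"
  define c where "c = Poly_Mapping.lookup g"
  define w where "w j = (Q - 1) * e j" for j
  define in_class where "in_class m \<longleftrightarrow> (\<forall>j<n. [Anat s f m j = e j] (mod Q))" for m
  have char_sum: "(\<Sum>x\<in>T. \<Prod>j<n. x j ^ (Anat s f m j + w j)) = (if in_class m then (-1) ^ n else 0)"
    for m
    unfolding T_def sum_torus_character Q_def[symmetric] w_def in_class_def
      dvd_add_mult_pred_iff[OF \<open>Q \<ge> 1\<close>] ..
  have "0 = (\<Sum>x\<in>T. eval g (param_pt s f x) * (\<Prod>j<n. x j ^ w j))"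
    using van by (auto simp: T_def PiE_iff intro!: sum.neutral[symmetric])
  also have "\<dots> = (\<Sum>x\<in>T. \<Sum>m\<in>K. c m * (\<Prod>j<n. x j ^ (Anat s f m j + w j)))"
    unfolding eval_param_pt[OF edges g] K_def c_def
    by (simp add: sum_distrib_right mult.assoc prod.distrib[symmetric] power_add)
  also have "\<dots> = (\<Sum>m\<in>K. c m * (\<Sum>x\<in>T. \<Prod>j<n. x j ^ (Anat s f m j + w j)))"
    by (subst sum.swap) (simp add: sum_distrib_left)
  also have "\<dots> = (-1) ^ n * (\<Sum>m\<in>{m \<in> K. in_class m}. c m)"
    using sum.inter_filter[of K c in_class]
    by (simp add: K_def char_sum sum_distrib_left if_distrib mult.commute cong: if_cong)
  finally show ?thesis by (simp add: K_def c_def in_class_def Q_def)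
qed


section \<open>Homogeneous polynomials vanishing on X lie in the binomial ideal\<close>

lemma mdeg_superset:
  assumes "finite A" and "Poly_Mapping.keys m \<subseteq> A"
  shows "mdeg m = (\<Sum>i\<in>A. Poly_Mapping.lookup m i)"
  unfolding mdeg_def by (rule sum.mono_neutral_left[OF assms]) (auto simp: in_keys_iff)

lemma mdeg_add: "mdeg (a + b) = mdeg a + mdeg b"
proof -
  let ?A = "Poly_Mapping.keys a \<union> Poly_Mapping.keys b"
  have "mdeg (a + b) = (\<Sum>i\<in>?A. Poly_Mapping.lookup (a + b) i)"
    by (rule mdeg_superset) (auto simp: keys_add)
  thus ?thesis by (simp add: lookup_add sum.distrib mdeg_superset[of ?A a] mdeg_superset[of ?A b])
qed

text \<open>Two monomials t^m, t^m' share the factor t^g, g = min(m, m'), and the cofactors are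
  t^(a+), t^(a-) for the integer vector a = m - m'.\<close>
lemma monomial_pair_factor:
  fixes m m' :: "nat \<Rightarrow>\<^sub>0 nat"
  obtains g a where "m = g + pos_part a" "m' = g + neg_part a"
    and "Poly_Mapping.keys g \<subseteq> Poly_Mapping.keys m"
    and "Poly_Mapping.keys a \<subseteq> Poly_Mapping.keys m \<union> Poly_Mapping.keys m'"
proof
  define a :: "nat \<Rightarrow>\<^sub>0 int" where "a = Poly_Mapping.map int m - Poly_Mapping.map int m'"
  have la: "Poly_Mapping.lookup a i = int (Poly_Mapping.lookup m i) - int (Poly_Mapping.lookup m' i)" for i
    by (simp add: a_def lookup_minus Poly_Mapping.map.rep_eq when_def)
  show "m = (m - pos_part a) + pos_part a" "m' = (m - pos_part a) + neg_part a"
    by (rule poly_mapping_eqI; simp add: lookup_add lookup_minus lookup_pos_part lookup_neg_part la)+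
  show "Poly_Mapping.keys (m - pos_part a) \<subseteq> Poly_Mapping.keys m"
    by (auto simp: in_keys_iff lookup_minus)
  show "Poly_Mapping.keys a \<subseteq> Poly_Mapping.keys m \<union> Poly_Mapping.keys m'"
    by (auto simp: in_keys_iff la)
qed

lemma monomial_difference_in_binomial_ideal:
  assumes keys: "Poly_Mapping.keys m \<subseteq> {..<s}" "Poly_Mapping.keys m' \<subseteq> {..<s}"
    and deg: "mdeg m = mdeg m'"
    and cong: "\<forall>j<n. [Anat s f m j = Anat s f m' j] (mod CARD('a) - 1)"
  shows "(Defs.monom m - Defs.monom m' :: 'a::{field,finite} mpoly) \<in> ideal_gen s (binomial_gens n s f)"
proof -
  obtain g a where m: "m = g + pos_part a" and m': "m' = g + neg_part a"
    and keys_g: "Poly_Mapping.keys g \<subseteq> Poly_Mapping.keys m"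
    and keys_a: "Poly_Mapping.keys a \<subseteq> Poly_Mapping.keys m \<union> Poly_Mapping.keys m'"
    by (rule monomial_pair_factor)
  have "CARD('a) \<ge> 1" using card_field_ge_2[where 'a='a] by simp
  moreover have "[Anat s f (pos_part a) j = Anat s f (neg_part a) j] (mod CARD('a) - 1)" if "j < n" for j
    using cong that unfolding m m' Anat_add cong_add_lcancel_nat by blast
  ultimately have "\<forall>j<n. Amul s f (pos_part a) j mod (int CARD('a) - 1)
                        = Amul s f (neg_part a) j mod (int CARD('a) - 1)"
    using Amul_cong_iff by blast
  moreover have "mdeg (pos_part a) = mdeg (neg_part a)" using deg unfolding m m' mdeg_add by simp
  moreover have "Poly_Mapping.keys a \<subseteq> {..<s}" using keys keys_a by blast
  ultimately have gen: "(Defs.monom (pos_part a) - Defs.monom (neg_part a) :: 'a mpoly) \<in> binomial_gens n s f"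
    unfolding binomial_gens_def by blast
  have "(Defs.monom m - Defs.monom m' :: 'a mpoly)
          = Defs.monom g * (Defs.monom (pos_part a) - Defs.monom (neg_part a))"
    unfolding m m' Defs.monom_def by (simp add: right_diff_distrib mult_single)
  moreover have "(Defs.monom g :: 'a mpoly) \<in> polys s"
    unfolding Defs.monom_def using keys keys_g by (intro polys_single) blast
  ultimately show ?thesis using ideal_gen_mult ideal_gen_base[OF gen] by metis
qed

definition A_residue :: "nat \<Rightarrow> nat \<Rightarrow> nat \<Rightarrow> (nat \<Rightarrow> nat set) \<Rightarrow> (nat \<Rightarrow>\<^sub>0 nat) \<Rightarrow> nat \<Rightarrow> nat" where
  "A_residue Q n s f m = (\<lambda>j\<in>{..<n}. Anat s f m j mod Q)"

lemma A_residue_eq_iff: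
  "A_residue Q n s f m = A_residue Q n s f m' \<longleftrightarrow> (\<forall>j<n. [Anat s f m j = Anat s f m' j] (mod Q))"
  by (auto simp: A_residue_def cong_def restrict_def fun_eq_iff)

text \<open>Choose a representative r m of the residue class of each monomial m of g.  Then
  g = \<Sum> c_m (t^m - t^(r m)), because the c_m cancel on each class, and each
  t^m - t^(r m) lies in the binomial ideal.\<close>
lemma vanishing_in_binomial_ideal:
  fixes g :: "'a::{field,finite} mpoly"
  assumes edges: "\<forall>i<s. f i \<subseteq> {..<n}" and g: "g \<in> polys s" and "homogeneous g"
    and van: "\<forall>x. (\<forall>j<n. x j \<noteq> 0) \<longrightarrow> eval g (param_pt s f x) = 0"
  shows "g \<in> ideal_gen s (binomial_gens n s f)"
proof -
  define K where "K = Poly_Mapping.keys g"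
  define c where "c = Poly_Mapping.lookup g"
  define R where "R = A_residue (CARD('a) - 1) n s f"
  define r where "r m = (SOME m'. m' \<in> K \<and> R m' = R m)" for m
  have r: "r m \<in> K \<and> R (r m) = R m" if "m \<in> K" for m
    unfolding r_def by (rule someI[of _ m]) (use that in simp)
  have fibre: "{m'\<in>K. r m' = r m} = {m'\<in>K. \<forall>j<n. [Anat s f m' j = Anat s f m j] (mod CARD('a) - 1)}"
    if "m \<in> K" for m
  proof -
    have "r m' = r m \<longleftrightarrow> R m' = R m" if "m' \<in> K" for m'
    proof
      assume "r m' = r m" thus "R m' = R m" using r \<open>m \<in> K\<close> \<open>m' \<in> K\<close> by metis
    next
      assume "R m' = R m" thus "r m' = r m" unfolding r_def by simp
    qed
    thus ?thesis by (auto simp: R_def A_residue_eq_iff)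
  qed
  have keys: "Poly_Mapping.keys m \<subseteq> {..<s}" if "m \<in> K" for m
    using g that unfolding polys_def K_def by blast
  obtain d where deg: "\<forall>m\<in>K. mdeg m = d" using \<open>homogeneous g\<close> unfolding homogeneous_def K_def by blast
  have "g = (\<Sum>m\<in>K. Poly_Mapping.single m (c m) - Poly_Mapping.single (r m) (c m))
            + (\<Sum>m\<in>K. Poly_Mapping.single (r m) (c m))"
    using sum_of_terms[of g] by (simp add: K_def c_def sum_subtractf)
  also have "(\<Sum>m\<in>K. Poly_Mapping.single (r m) (c m)) = 0"
  proof (rule sum_terms_fibres_zero)
    show "finite K" by (simp add: K_def)
    fix m assume "m \<in> K"
    show "(\<Sum>m'\<in>{m'\<in>K. r m' = r m}. c m') = 0"
      unfolding fibre[OF \<open>m \<in> K\<close>]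
      using coefficient_class_sum_vanishes[OF edges g van, folded K_def c_def] .
  qed
  finally have g_sum: "g = (\<Sum>m\<in>K. Poly_Mapping.single 0 (c m) * (Defs.monom m - Defs.monom (r m)))"
    by (simp add: Defs.monom_def right_diff_distrib mult_single)
  show ?thesis
  proof (subst g_sum, intro ideal_gen_sum ideal_gen_mult)
    fix m assume "m \<in> K"
    thus "Poly_Mapping.single 0 (c m) \<in> polys s" by (intro polys_single) simp
    show "(Defs.monom m - Defs.monom (r m) :: 'a mpoly) \<in> ideal_gen s (binomial_gens n s f)"
      using r[OF \<open>m \<in> K\<close>] keys deg \<open>m \<in> K\<close> unfolding R_def A_residue_eq_iff
      by (intro monomial_difference_in_binomial_ideal) (auto simp: cong_sym_eq)
  qed (simp add: K_def)
qed


theorem proposition4p3: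
  fixes n s :: nat and f :: "nat \<Rightarrow> nat set"
  assumes "CARD('a::{field,finite}) \<noteq> 2"
    and "clutter n s f"
    and "s \<ge> 2"
  shows "(vanishing_ideal n s f :: 'a mpoly set) = ideal_gen s (binomial_gens n s f)"
proof -
  define V where "V = {g \<in> polys s. homogeneous g \<and>
        (\<forall>x. (\<forall>j<n. x j \<noteq> 0) \<longrightarrow> eval g (param_pt s f x) = (0::'a))}"
  have edges: "\<forall>i<s. f i \<subseteq> {..<n}" using assms(2) unfolding clutter_def by blast
  have "V \<subseteq> ideal_gen s (binomial_gens n s f)"
    unfolding V_def using vanishing_in_binomial_ideal[OF edges] by blast
  moreover have "binomial_gens n s f \<subseteq> ideal_gen s V"
    unfolding V_def using binomial_gens_vanishing[OF edges] by (blast intro: ideal_gen_base)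
  ultimately show ?thesis
    unfolding vanishing_ideal_def V_def[symmetric] using ideal_gen_mono by blast
qed

end
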